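(* Under the setting, assumptions (A1)–(A2) and the algorithm PDAc-L described in the context, fix any $(x^\star,y^\star)\in\Omega$, let $J(x,y)=\mathcal L(x,y^\star)-\mathcal L(x^\star,y)$ and for $n\ge1$ define $$a_n=\frac{\psi}{\psi-1}\|z_{n+1}-x^\star\|^2+\frac1\beta\|y_{n-1}-y^\star\|^2+\omega\delta_{n-1}\|x_n-x_{n-1}\|^2,$$ $$b_n=-\frac{\tau_n\tau_{n-1}}{\xi}\|\theta_n\|^2+\frac1\beta\|y_n-y_{n-1}\|^2+\omega\delta_{n-1}\|x_n-x_{n-1}\|^2-2\tau_n\Phi_n^y.$$ Then for all $n\ge1$, $a_{n+1}+2\tau_nJ(x_n,y_n)\le a_n-b_n$.
   Context: Let $f:\mathbb{R}^p\to(-\infty,+\infty]$ and $g:\mathbb{R}^q\to(-\infty,+\infty]$ be proper closed convex functions; $f^*(y)=\sup_u\{\langle y,u\rangle-f(u)\}$ is the Fenchel conjugate, $\mathrm{dom}(h)=\{x:h(x)<+\infty\}$, and for $\lambda>0$, $\mathrm{Prox}_{\lambda h}(x)=\arg\min_u\{h(u)+\frac{1}{2\lambda}\|u-x\|^2\}$. Let $\Phi:\mathrm{dom}(g)\times\mathrm{dom}(f^* )\to\mathbb{R}$ be continuous and $\mathcal L(x,y)=g(x)+\Phi(x,y)-f^*(y)$. Let $\Omega$ be the set of $(x^\star,y^\star)\in\mathrm{dom}(g)\times\mathrm{dom}(f^* )$ with $-\nabla_x\Phi(x^\star,y^\star)\in\partial g(x^\star)$ and $\nabla_y\Phi(x^\star,y^\star)\in\partial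 f^*(y^\star)$. Assume: (A1) $\Omega\neq\emptyset$, $\mathrm{dom}(g)\times\mathrm{dom}(f^* )\subseteq\mathrm{dom}(\Phi)$, and $\mathcal L(x^\star,y^\star)$ is finite; (A2) for each $y\in\mathrm{dom}(f^* )$, $\Phi(\cdot,y)$ is convex and differentiable, for each $x\in\mathrm{dom}(g)$, $\Phi(x,\cdot)$ is concave and differentiable, and for all bounded $\mathcal X\subset\mathbb R^q$, $\mathcal Y\subset\mathbb R^p$ there exist $L_{yy},L_{xx}\ge 0$, $L_{xy}>0$ with $\|\nabla_y\Phi(x,y)-\nabla_y\Phi(x,\tilde y)\|\le L_{yy}\|y-\tilde y\|$ and $\|\nabla_x\Phi(x,y)-\nabla_x\Phi(\tilde x,\tilde y)\|\le L_{xx}\|x-\tilde x\|+L_{xy}\|y-\tilde y\|$ for all $x,\tilde x\in\mathcal X\cap\mathrm{dom}(g)$, $y,\tilde y\in\mathcal Y\cap\mathrm{dom}(f^* )$. Algorithm PDAc-L: choose $\psi\in(1,1+\sqrt3)$, $\xi>0$, $\varphi>1$ with $\omega:=2\psi-\xi-\frac{\psi^3\varphi}{1+\psi}>0$, $\tau_{\max}>0$, $\nu\in(0,1)$, $\mu\in(0,1)$, $\eta\in[0,1)$, an integer $M\ge1$, $\beta>0$, $x_0\in\mathrm{dom}(g)$, $y_0\in\mathrm{dom}(f^* )$, $\tau_0\in(0,\tau_{\max}]$; set $z_0=x_0$, $\delta_0=1$. For $n=1,2,\dots$: (1) $z_n=\frac{\psi-1}{\psi}x_{n-1}+\frac1\psi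 z_{n-1}$ and $x_n=\mathrm{Prox}_{\tau_{n-1}g}(z_n-\tau_{n-1}\nabla_x\Phi(x_{n-1},y_{n-1}))$. (2) Let $\tau=\min\{\varphi\tau_{n-1},\tau_{\max}\}$; set $\tau_n=\tau\mu^i$ and $y_n=\mathrm{Prox}_{\beta\tau_n f^*}(y_{n-1}+\beta\tau_n\nabla_y\Phi(x_n,y_{n-1}))$, where $i$ is the smallest nonnegative integer such that $\frac{\tau_n\tau_{n-1}}{\xi}\|\theta_n\|^2+2\tau_n\Phi_n^y\le\nu r_n+(1-\nu)c_n$, with $\theta_n=\nabla_x\Phi(x_n,y_n)-\nabla_x\Phi(x_{n-1},y_{n-1})$, $\Phi_n^y=\Phi(x_n,y_{n-1})+\langle\nabla_y\Phi(x_n,y_{n-1}),y_n-y_{n-1}\rangle-\Phi(x_n,y_n)$, $r_n=\omega\delta_{n-1}\|x_n-x_{n-1}\|^2+\frac1\beta\|y_n-y_{n-1}\|^2$, $c_n=\frac{\eta}{|\mathcal I_n|}\sum_{i\in\mathcal I_n}r_i$, $\mathcal I_n=\{n-1,n-2,\dots,\max\{n-M,1\}\}$ (the $r_i$ for $i<n$ being the values from earlier iterations; for $n=1$, $\mathcal I_1=\emptyset$ and $c_1:=0$). (3) $\delta_n=\tau_n/\tau_{n-1}$. *)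

theory Defs
  imports "HOL-Analysis.Analysis"
begin

definition epigraph :: "('a \<Rightarrow> ereal) \<Rightarrow> ('a \<times> real) set" where
  "epigraph h = {(x, t). h x \<le> ereal t}"

definition proper_fun :: "('a \<Rightarrow> ereal) \<Rightarrow> bool" where
  "proper_fun h \<longleftrightarrow> (\<forall>x. h x \<noteq> -\<infinity>) \<and> (\<exists>x. h x < \<infinity>)"

definition closed_fun :: "('a::topological_space \<Rightarrow> ereal) \<Rightarrow> bool" where
  "closed_fun h \<longleftrightarrow> closed (epigraph h)"

definition convex_fun :: "('a::real_vector \<Rightarrow> ereal) \<Rightarrow> bool" where
  "convex_fun h \<longleftrightarrow> convex (epigraph h)"

definition edom :: "('a \<Rightarrow> ereal) \<Rightarrow> 'a set" where
  "edom h = {x. h x < \<infinity>}"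

definition fconj :: "('a::real_inner \<Rightarrow> ereal) \<Rightarrow> 'a \<Rightarrow> ereal" where
  "fconj f y = (SUP u. ereal (y \<bullet> u) - f u)"

definition subdiff :: "('a::real_inner \<Rightarrow> ereal) \<Rightarrow> 'a \<Rightarrow> 'a set" where
  "subdiff h x = {v. h x < \<infinity> \<and> (\<forall>u. h x + ereal (v \<bullet> (u - x)) \<le> h u)}"

text \<open>The set of minimizers of u |-> h u + ||u - x||^2/(2 lam); for proper closed convex h
  and lam > 0 this is the singleton {Prox_{lam h}(x)}.\<close>
definition Prox_set :: "('a::real_normed_vector \<Rightarrow> ereal) \<Rightarrow> real \<Rightarrow> 'a \<Rightarrow> 'a set" where
  "Prox_set h lam x = {u. \<forall>v. h u + ereal (norm (u - x)^2 / (2 * lam))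
                              \<le> h v + ereal (norm (v - x)^2 / (2 * lam))}"

text \<open>Quantities of the algorithm PDAc-L (x, y, delta are the iterate sequences,
  Gx, Gy the partial gradients of Phi).\<close>

definition theta_n :: "('a \<Rightarrow> 'b \<Rightarrow> 'a::real_vector) \<Rightarrow> (nat \<Rightarrow> 'a) \<Rightarrow> (nat \<Rightarrow> 'b) \<Rightarrow> nat \<Rightarrow> 'b \<Rightarrow> 'a" where
  "theta_n Gx x y n v = Gx (x n) v - Gx (x (n - 1)) (y (n - 1))"

definition PhiY_n :: "('a \<Rightarrow> 'b \<Rightarrow> real) \<Rightarrow> ('a \<Rightarrow> 'b \<Rightarrow> 'b::real_inner) \<Rightarrow> (nat \<Rightarrow> 'a) \<Rightarrow> (nat \<Rightarrow> 'b) \<Rightarrow> nat \<Rightarrow> 'b \<Rightarrow> real" where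
  "PhiY_n Phi Gy x y n v = Phi (x n) (y (n - 1)) + Gy (x n) (y (n - 1)) \<bullet> (v - y (n - 1)) - Phi (x n) v"

definition r_n :: "real \<Rightarrow> real \<Rightarrow> (nat \<Rightarrow> real) \<Rightarrow> (nat \<Rightarrow> 'a::real_normed_vector) \<Rightarrow> (nat \<Rightarrow> 'b::real_normed_vector) \<Rightarrow> nat \<Rightarrow> 'b \<Rightarrow> real" where
  "r_n \<omega> \<beta> \<delta> x y n v = \<omega> * \<delta> (n - 1) * (norm (x n - x (n - 1)))^2 + (1 / \<beta>) * (norm (v - y (n - 1)))^2"

definition c_n :: "real \<Rightarrow> nat \<Rightarrow> real \<Rightarrow> real \<Rightarrow> (nat \<Rightarrow> real) \<Rightarrow> (nat \<Rightarrow> 'a::real_normed_vector) \<Rightarrow> (nat \<Rightarrow> 'b::real_normed_vector) \<Rightarrow> nat \<Rightarrow> real" where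
  "c_n \<eta> M \<omega> \<beta> \<delta> x y n =
     (let I = {max (n - M) 1 .. n - 1} in
      if I = {} then 0 else \<eta> / real (card I) * (\<Sum>i\<in>I. r_n \<omega> \<beta> \<delta> x y i (y i)))"

end

theory Submission
  imports Defs
begin

text \<open>The estimate concerns a single iteration and does not use that (x*, y*) is a saddle
point: it holds for every point of dom g \<times> dom f*. The prox steps producing x_{n+1}, x_n and y_n
give three variational inequalities, and convexity of Phi(., y_n) and concavity of Phi(x_n, .)
give two tangent inequalities; weighted by tau_n, delta_n tau_{n-1} = tau_n and beta tau_n they
bound tau_n J(x_n, y_n) by inner products. The three-point identity, the relation
psi z_{n+2} = (psi - 1) x_{n+1} + z_{n+1} and Young's inequality for the theta_n term turn these
into the squared norms of a_n and b_n, and the coefficient left in front of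
||x_{n+1} - x_n||^2 is at least omega delta_n because delta_n \<le> phi.\<close>

section \<open>Identities and inequalities in inner product spaces\<close>

lemma inner_three_point:
  fixes a b c :: "'a::real_inner"
  shows "2 * ((a - b) \<bullet> (c - a)) = norm (c - b)^2 - norm (a - b)^2 - norm (c - a)^2"
proof -
  have "(a - b) + (c - a) = c - b"
    by simp
  then show ?thesis
    using dot_norm[of "a - b" "c - a"] by simp
qed

lemma norm_convex_combination_power2:
  fixes a b :: "'a::real_inner"
  shows "norm ((1 - s) *\<^sub>R a + s *\<^sub>R b)^2
    = (1 - s) * norm a^2 + s * norm b^2 - s * (1 - s) * norm (a - b)^2"
  unfolding power2_norm_eq_inner
  by (simp add: inner_add_left inner_add_right inner_diff_left inner_diff_right
      inner_commute algebra_simps)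

lemma inner_le_Young:
  fixes u v :: "'a::real_inner"
  assumes "0 < e"
  shows "2 * (u \<bullet> v) \<le> e * norm u^2 + norm v^2 / e"
proof -
  have "0 \<le> norm (e *\<^sub>R u - v)^2"
    by simp
  also have "\<dots> = e^2 * norm u^2 + norm v^2 - 2 * e * (u \<bullet> v)"
    using dot_norm_neg[of "e *\<^sub>R u" v] by (simp add: power_mult_distrib)
  finally have "e * (2 * (u \<bullet> v)) \<le> e * (e * norm u^2 + norm v^2 / e)"
    using assms by (simp add: algebra_simps power2_eq_square)
  then show ?thesis
    using assms by simp
qed

lemma weighted_norm_power2_diff_le:
  fixes a b :: "'a::real_inner"
  shows "\<alpha> * \<beta> * norm (a - b)^2 \<le> (\<alpha> + \<beta>) * (\<alpha> * norm a^2 + \<beta> * norm b^2)"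
proof -
  have "(\<alpha> + \<beta>) * (\<alpha> * norm a^2 + \<beta> * norm b^2) - \<alpha> * \<beta> * norm (a - b)^2
      = norm (\<alpha> *\<^sub>R a + \<beta> *\<^sub>R b)^2"
    unfolding power2_norm_eq_inner
    by (simp add: inner_add_left inner_add_right inner_diff_left inner_diff_right
        inner_commute algebra_simps)
  then show ?thesis
    by (metis diff_ge_0_iff_ge zero_le_power2)
qed

section \<open>Convex extended-real functions and proximal points\<close>

lemma ereal_real_of_ereal_if_edom:
  "x \<in> edom h \<Longrightarrow> h x \<noteq> -\<infinity> \<Longrightarrow> ereal (real_of_ereal (h x)) = h x"
  by (cases "h x") (auto simp: edom_def)

lemma Prox_set_in_edom:
  assumes "p \<in> Prox_set h lam w" and "v \<in> edom h"
  shows "p \<in> edom h"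
proof -
  have "h p + ereal (norm (p - w)^2 / (2 * lam)) \<le> h v + ereal (norm (v - w)^2 / (2 * lam))"
    using assms(1) by (simp add: Prox_set_def)
  also have "\<dots> < \<infinity>"
    using assms(2) by (simp add: edom_def)
  finally show ?thesis
    by (auto simp: edom_def)
qed

lemma convex_on_real_of_ereal:
  fixes h :: "'a::real_vector \<Rightarrow> ereal"
  assumes cvx: "convex_fun h" and ninf: "\<And>x. h x \<noteq> -\<infinity>"
  shows "convex_on (edom h) (\<lambda>x. real_of_ereal (h x))"
proof -
  have comb: "h ((1 - t) *\<^sub>R x + t *\<^sub>R y)
      \<le> ereal ((1 - t) * real_of_ereal (h x) + t * real_of_ereal (h y))"
    if "x \<in> edom h" "y \<in> edom h" "0 \<le> t" "t \<le> 1" for x y t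
  proof -
    have "(1 - t) *\<^sub>R (x, real_of_ereal (h x)) + t *\<^sub>R (y, real_of_ereal (h y)) \<in> epigraph h"
      using cvx that ereal_real_of_ereal_if_edom[OF that(1) ninf]
        ereal_real_of_ereal_if_edom[OF that(2) ninf]
      unfolding convex_fun_def
      by (intro convexD) (auto simp: epigraph_def)
    then show ?thesis
      by (simp add: epigraph_def)
  qed
  have "convex (edom h)"
    unfolding convex_alt using comb by (fastforce simp: edom_def)
  moreover have "real_of_ereal (h ((1 - t) *\<^sub>R x + t *\<^sub>R y))
      \<le> (1 - t) * real_of_ereal (h x) + t * real_of_ereal (h y)"
    if "x \<in> edom h" "y \<in> edom h" "0 < t" "t < 1" for x y t
    using comb[OF that(1,2), of t] that(3,4) ninf[of "(1 - t) *\<^sub>R x + t *\<^sub>R y"]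
    by (cases "h ((1 - t) *\<^sub>R x + t *\<^sub>R y)") auto
  ultimately show ?thesis
    by (intro convex_onI)
qed

lemma epigraph_fconj_iff:
  "(c, r) \<in> epigraph (fconj f) \<longleftrightarrow> (\<forall>u. ereal (c \<bullet> u) - f u \<le> ereal r)"
  by (simp add: epigraph_def fconj_def SUP_le_iff)

lemma convex_fun_fconj: "convex_fun (fconj f)"
  unfolding convex_fun_def convex_alt
proof (clarify)
  fix a s b s' and t :: real
  assume "(a, s) \<in> epigraph (fconj f)" "(b, s') \<in> epigraph (fconj f)" and t: "0 \<le> t" "t \<le> 1"
  then have a: "ereal (a \<bullet> u) - f u \<le> ereal s" and b: "ereal (b \<bullet> u) - f u \<le> ereal s'" for u
    by (simp_all add: epigraph_fconj_iff)
  have "ereal (((1 - t) *\<^sub>R a + t *\<^sub>R b) \<bullet> u) - f u \<le> ereal ((1 - t) * s + t * s')" for u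
  proof (cases "f u")
    case (real r)
    have "a \<bullet> u - r \<le> s" "b \<bullet> u - r \<le> s'"
      using a[of u] b[of u] real by simp_all
    then have "(1 - t) * (a \<bullet> u - r) + t * (b \<bullet> u - r) \<le> (1 - t) * s + t * s'"
      using t by (intro add_mono mult_left_mono) auto
    then show ?thesis
      using real by (simp add: inner_add_left algebra_simps)
  next
    case MInf
    then show ?thesis
      using a[of u] by simp
  qed simp
  then show "(1 - t) *\<^sub>R (a, s) + t *\<^sub>R (b, s') \<in> epigraph (fconj f)"
    by (simp add: epigraph_fconj_iff)
qed

lemma fconj_neq_MInf:
  assumes "proper_fun f"
  shows "fconj f y \<noteq> -\<infinity>"
proof -
  obtain u where u: "f u < \<infinity>" "f u \<noteq> -\<infinity>"
    using assms by (auto simp: proper_fun_def)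
  have "ereal (y \<bullet> u) - f u \<le> fconj f y"
    unfolding fconj_def by (rule SUP_upper) simp
  with u show ?thesis
    by (cases "f u") auto
qed

lemma Prox_set_real_le:
  assumes p: "p \<in> Prox_set h lam w" and ninf: "\<And>x. h x \<noteq> -\<infinity>" and u: "u \<in> edom h"
  shows "real_of_ereal (h p) - real_of_ereal (h u) \<le> (norm (u - w)^2 - norm (p - w)^2) / (2 * lam)"
proof -
  have "h p + ereal (norm (p - w)^2 / (2 * lam)) \<le> h u + ereal (norm (u - w)^2 / (2 * lam))"
    using p by (simp add: Prox_set_def)
  moreover obtain a b where "h p = ereal a" "h u = ereal b"
    using Prox_set_in_edom[OF p u] u ninf[of p] ninf[of u]
    by (cases "h p"; cases "h u") (auto simp: edom_def)
  ultimately show ?thesis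
    by (simp add: diff_divide_distrib)
qed

lemma nonpos_if_le_small_multiples:
  fixes a b :: real
  assumes "\<And>t. 0 < t \<Longrightarrow> t < 1 \<Longrightarrow> a \<le> t * b"
  shows "a \<le> 0"
proof (rule tendsto_lowerbound)
  show "((\<lambda>t. t * b) \<longlongrightarrow> 0) (at_right 0)"
    by (auto intro!: tendsto_eq_intros)
  show "\<forall>\<^sub>F t in at_right 0. a \<le> t * b"
    using eventually_at_right_real[OF zero_less_one] by eventually_elim (use assms in auto)
qed simp

lemma Prox_set_variational_ineq:
  fixes h :: "'a::real_inner \<Rightarrow> ereal"
  assumes p: "p \<in> Prox_set h lam w" and lam: "0 < lam"
    and cvx: "convex_fun h" and ninf: "\<And>x. h x \<noteq> -\<infinity>" and x: "x \<in> edom h"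
  shows "lam * (real_of_ereal (h p) - real_of_ereal (h x)) \<le> (p - w) \<bullet> (x - p)"
proof -
  define H where "H u = real_of_ereal (h u)" for u
  define I where "I = (p - w) \<bullet> (x - p)"
  define N where "N = norm (x - p)^2"
  have p_dom: "p \<in> edom h"
    using Prox_set_in_edom[OF p x] .
  have H_cvx: "convex_on (edom h) H"
    unfolding H_def using convex_on_real_of_ereal[OF cvx ninf] .
  have "lam * (H p - H x) - I \<le> 0"
  proof (rule nonpos_if_le_small_multiples)
    fix t :: real assume t: "0 < t" "t < 1"
    define u where "u = (1 - t) *\<^sub>R p + t *\<^sub>R x"
    have u_dom: "u \<in> edom h"
      using H_cvx p_dom x t unfolding u_def convex_on_def convex_alt by simp
    have "H p - H u \<le> (norm (u - w)^2 - norm (p - w)^2) / (2 * lam)"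
      unfolding H_def by (rule Prox_set_real_le[OF p ninf u_dom])
    also have "norm (u - w)^2 = norm (p - w)^2 + 2 * t * I + t^2 * N"
    proof -
      have uw: "u - w = (p - w) + t *\<^sub>R (x - p)"
        by (simp add: u_def algebra_simps)
      show ?thesis
        unfolding uw I_def N_def using dot_norm[of "p - w" "t *\<^sub>R (x - p)"]
        by (simp add: power_mult_distrib)
    qed
    finally have "H p - H u \<le> t * ((2 * I + t * N) / (2 * lam))"
      by (simp add: algebra_simps power2_eq_square)
    moreover have "H u \<le> (1 - t) * H p + t * H x"
      using convex_onD[OF H_cvx, of t p x] p_dom x t unfolding u_def by simp
    ultimately have "t * (H p - H x) \<le> t * ((2 * I + t * N) / (2 * lam))"
      by (simp add: algebra_simps)
    then have "H p - H x \<le> (2 * I + t * N) / (2 * lam)"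
      using mult_le_cancel_left_pos[OF t(1)] by blast
    with lam have "(H p - H x) * (2 * lam) \<le> 2 * I + t * N"
      by (simp add: pos_le_divide_eq)
    then show "lam * (H p - H x) - I \<le> t * (N / 2)"
      by (simp add: algebra_simps)
  qed
  then show ?thesis
    by (simp add: H_def I_def)
qed

lemma convex_on_imp_above_tangent_inner:
  fixes \<phi> :: "'a::real_inner \<Rightarrow> real"
  assumes cvx: "convex_on S \<phi>" and u: "u \<in> S" and x: "x \<in> S"
    and deriv: "(\<phi> has_derivative (\<lambda>h. G \<bullet> h)) (at u)"
  shows "\<phi> u + G \<bullet> (x - u) \<le> \<phi> x"
proof -
  define \<gamma> where "\<gamma> = (\<lambda>s. \<phi> (u + s *\<^sub>R (x - u)))"
  have "((\<lambda>s. u + s *\<^sub>R (x - u)) has_derivative (\<lambda>s. s *\<^sub>R (x - u))) (at 0)"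
    by (auto intro!: derivative_eq_intros)
  from has_derivative_compose[OF this, of \<phi> "\<lambda>h. G \<bullet> h"] deriv
  have "(\<gamma> has_derivative (\<lambda>s. s * (G \<bullet> (x - u)))) (at 0)"
    by (simp add: \<gamma>_def)
  then have "(\<gamma> has_field_derivative G \<bullet> (x - u)) (at 0)"
    unfolding has_field_derivative_def by (rule has_derivative_eq_rhs) (simp add: fun_eq_iff)
  then have "((\<lambda>s. (\<gamma> s - \<gamma> 0) / (s - 0)) \<longlongrightarrow> G \<bullet> (x - u)) (at_right 0)"
    using has_field_derivative_at_within has_field_derivative_iff by blast
  moreover have "\<forall>\<^sub>F s in at_right 0. (\<gamma> s - \<gamma> 0) / (s - 0) \<le> \<phi> x - \<phi> u"
    using eventually_at_right_real[OF zero_less_one]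
  proof eventually_elim
    case (elim s)
    have "\<gamma> s = \<phi> ((1 - s) *\<^sub>R u + s *\<^sub>R x)"
      by (simp add: \<gamma>_def algebra_simps)
    also have "\<dots> \<le> (1 - s) * \<phi> u + s * \<phi> x"
      using convex_onD[OF cvx, of s u x] elim u x by simp
    finally have "\<gamma> s - \<gamma> 0 \<le> s * (\<phi> x - \<phi> u)"
      by (simp add: \<gamma>_def algebra_simps)
    with elim show ?case
      by (simp add: pos_divide_le_eq mult.commute)
  qed
  ultimately have "G \<bullet> (x - u) \<le> \<phi> x - \<phi> u"
    by (rule tendsto_upperbound) simp
  then show ?thesis
    by simp
qed

section \<open>One iteration of PDAc-L\<close>

lemma extrapolation_three_point:
  fixes p Z Z' w :: "'a::real_inner"
  assumes \<psi>: "1 < \<psi>" and Z': "Z' = ((\<psi> - 1) / \<psi>) *\<^sub>R p + (1 / \<psi>) *\<^sub>R Z"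
  shows "2 * ((p - Z) \<bullet> (w - p))
    = \<psi> / (\<psi> - 1) * (norm (Z - w)^2 - norm (Z' - w)^2) - (1 + 1 / \<psi>) * norm (p - Z)^2"
proof -
  have "Z' - w = (1 - 1 / \<psi>) *\<^sub>R (p - w) + (1 / \<psi>) *\<^sub>R (Z - w)"
    using \<psi> by (simp add: Z' diff_divide_distrib algebra_simps)
  then have "\<psi> / (\<psi> - 1) * norm (Z' - w)^2
      = \<psi> / (\<psi> - 1) * ((1 - 1 / \<psi>) * norm (p - w)^2 + 1 / \<psi> * norm (Z - w)^2
          - 1 / \<psi> * (1 - 1 / \<psi>) * norm (p - Z)^2)"
    using norm_convex_combination_power2[of "1 / \<psi>" "p - w" "Z - w"] by simp
  also have "\<dots> = norm (p - w)^2 + 1 / (\<psi> - 1) * norm (Z - w)^2 - 1 / \<psi> * norm (p - Z)^2"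
    using \<psi> by (simp add: field_simps)
  finally have "\<psi> / (\<psi> - 1) * norm (Z' - w)^2
      = norm (p - w)^2 + 1 / (\<psi> - 1) * norm (Z - w)^2 - 1 / \<psi> * norm (p - Z)^2" .
  moreover have "\<psi> / (\<psi> - 1) * norm (Z - w)^2 = norm (Z - w)^2 + 1 / (\<psi> - 1) * norm (Z - w)^2"
    using \<psi> by (simp add: field_simps)
  moreover have "2 * ((p - Z) \<bullet> (w - p)) = norm (w - Z)^2 - norm (p - Z)^2 - norm (w - p)^2"
    by (rule inner_three_point)
  ultimately show ?thesis
    by (simp add: norm_minus_commute algebra_simps)
qed

text \<open>This is where the choice of omega enters: the slack in the coefficient inequality
  is psi^3 d (phi - d) / (1 + psi), nonnegative because d \<le> phi.\<close>

lemma extrapolation_coercivity: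
  fixes a b :: "'a::real_inner"
  assumes \<psi>: "1 < \<psi>" and d: "0 < d" "d \<le> \<phi>"
    and \<omega>: "\<omega> = 2 * \<psi> - \<xi> - \<psi>^3 * \<phi> / (1 + \<psi>)"
  shows "(\<omega> + \<xi>) * d * norm (a - b)^2
    \<le> (1 + 1 / \<psi> - d * \<psi>) * norm a^2 + d * \<psi> * norm b^2 + d * \<psi> * norm (a - b)^2"
proof -
  define \<kappa> where "\<kappa> = d * \<psi>"
  define \<alpha> where "\<alpha> = 1 + 1 / \<psi> - \<kappa>"
  have nonzero: "\<psi> \<noteq> 0" "1 + \<psi> \<noteq> 0"
    using \<psi> by simp_all
  have sum: "\<alpha> + \<kappa> = (1 + \<psi>) / \<psi>"
    using nonzero by (simp add: \<alpha>_def field_simps)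
  have "\<alpha> * \<kappa> * norm (a - b)^2 \<le> (\<alpha> + \<kappa>) * (\<alpha> * norm a^2 + \<kappa> * norm b^2)"
    by (rule weighted_norm_power2_diff_le)
  moreover have "0 < \<alpha> + \<kappa>"
    unfolding sum using \<psi> by simp
  ultimately have "\<alpha> * \<kappa> / (\<alpha> + \<kappa>) * norm (a - b)^2 \<le> \<alpha> * norm a^2 + \<kappa> * norm b^2"
    by (simp add: pos_divide_le_eq mult.commute)
  moreover have "(\<omega> + \<xi>) * d \<le> \<alpha> * \<kappa> / (\<alpha> + \<kappa>) + \<kappa>"
  proof -
    have "\<alpha> * \<kappa> / (\<alpha> + \<kappa>) = (\<alpha> * \<psi>) * \<kappa> / (1 + \<psi>)"
      unfolding sum using nonzero by simp
    also have "\<alpha> * \<psi> = 1 + \<psi> - d * \<psi>^2"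
      using nonzero by (simp add: \<alpha>_def \<kappa>_def field_simps power2_eq_square)
    finally have "\<alpha> * \<kappa> / (\<alpha> + \<kappa>) + \<kappa> - (\<omega> + \<xi>) * d = \<psi>^3 * d * (\<phi> - d) / (1 + \<psi>)"
      using nonzero by (simp add: \<kappa>_def \<omega> field_simps power2_eq_square power3_eq_cube)
    also have "\<dots> \<ge> 0"
      using \<psi> d by simp
    finally show ?thesis
      by simp
  qed
  ultimately show ?thesis
    using mult_right_mono[of "(\<omega> + \<xi>) * d" "\<alpha> * \<kappa> / (\<alpha> + \<kappa>) + \<kappa>" "norm (a - b)^2"]
    by (simp add: \<alpha>_def \<kappa>_def algebra_simps)
qed

text \<open>Applied with p, q, Z, Z' = x_{n+1}, x_n, z_{n+1}, z_{n+2}, with y, y' = y_n, y_{n-1},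
  t, t' = tau_n, tau_{n-1}, and (w, v) the reference point.\<close>

lemma descent_from_inner_bound:
  fixes p q Z Z' w \<theta> :: "'a::real_inner" and y y' v :: "'b::real_inner"
  assumes \<psi>: "1 < \<psi>" and \<xi>: "0 < \<xi>" and \<beta>: "0 < \<beta>"
    and \<omega>: "\<omega> = 2 * \<psi> - \<xi> - \<psi>^3 * \<phi> / (1 + \<psi>)"
    and t: "0 < t" "0 < t'" and d: "d = t / t'" and d_le: "d \<le> \<phi>"
    and Z': "Z' = ((\<psi> - 1) / \<psi>) *\<^sub>R p + (1 / \<psi>) *\<^sub>R Z"
    and bound: "t * J \<le> (p - Z) \<bullet> (w - p) + d * \<psi> * ((q - Z) \<bullet> (p - q)) + t * (\<theta> \<bullet> (q - p))
                  + 1 / \<beta> * ((y - y') \<bullet> (v - y)) + t * P"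
  shows "\<psi> / (\<psi> - 1) * norm (Z' - w)^2 + 1 / \<beta> * norm (y - v)^2 + \<omega> * d * norm (p - q)^2 + 2 * t * J
    \<le> \<psi> / (\<psi> - 1) * norm (Z - w)^2 + 1 / \<beta> * norm (y' - v)^2
       + t * t' / \<xi> * norm \<theta>^2 - 1 / \<beta> * norm (y - y')^2 + 2 * t * P"
proof -
  have d_pos: "0 < d"
    using t d by simp
  have x_three_point:
    "2 * ((q - Z) \<bullet> (p - q)) = norm (p - Z)^2 - norm (q - Z)^2 - norm (p - q)^2"
    using inner_three_point[of q Z p] by (simp add: norm_minus_commute)
  have y_three_point:
    "2 * ((y - y') \<bullet> (v - y)) = norm (y' - v)^2 - norm (y - y')^2 - norm (y - v)^2"
    using inner_three_point[of y y' v] by (simp add: norm_minus_commute)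
  have theta_Young: "2 * t * (\<theta> \<bullet> (q - p)) \<le> t * t' / \<xi> * norm \<theta>^2 + \<xi> * d * norm (p - q)^2"
  proof -
    have "2 * (\<theta> \<bullet> (q - p)) \<le> t' / \<xi> * norm \<theta>^2 + norm (q - p)^2 / (t' / \<xi>)"
      using t \<xi> by (intro inner_le_Young) simp
    from mult_left_mono[OF this, of t] show ?thesis
      using t \<xi> by (simp add: d norm_minus_commute field_simps)
  qed
  have "2 * t * J \<le> 2 * ((p - Z) \<bullet> (w - p)) + d * \<psi> * (2 * ((q - Z) \<bullet> (p - q)))
      + 2 * t * (\<theta> \<bullet> (q - p)) + 1 / \<beta> * (2 * ((y - y') \<bullet> (v - y))) + 2 * t * P"
    using mult_left_mono[OF bound, of 2] by (simp add: algebra_simps)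
  then show ?thesis
    unfolding extrapolation_three_point[OF \<psi> Z'] x_three_point y_three_point
    using theta_Young extrapolation_coercivity[OF \<psi> d_pos d_le \<omega>, of "p - Z" "q - Z"]
    by (simp add: algebra_simps)
qed

locale pdac_l_iteration =
  fixes f :: "'b::real_inner \<Rightarrow> ereal" and g :: "'a::real_inner \<Rightarrow> ereal"
    and Phi :: "'a \<Rightarrow> 'b \<Rightarrow> real" and Gx :: "'a \<Rightarrow> 'b \<Rightarrow> 'a" and Gy :: "'a \<Rightarrow> 'b \<Rightarrow> 'b"
    and \<psi> \<xi> \<phi> \<omega> \<tau>max \<mu> \<beta> :: real
    and x z :: "nat \<Rightarrow> 'a" and y :: "nat \<Rightarrow> 'b" and \<tau> \<delta> :: "nat \<Rightarrow> real"
  assumes f_proper: "proper_fun f" and g_proper: "proper_fun g" and g_convex: "convex_fun g"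
    and Gx_deriv: "\<And>u v. u \<in> edom g \<Longrightarrow> v \<in> edom (fconj f) \<Longrightarrow>
      ((\<lambda>u'. Phi u' v) has_derivative (\<lambda>h. Gx u v \<bullet> h)) (at u)"
    and Gy_deriv: "\<And>u v. u \<in> edom g \<Longrightarrow> v \<in> edom (fconj f) \<Longrightarrow>
      ((\<lambda>v'. Phi u v') has_derivative (\<lambda>h. Gy u v \<bullet> h)) (at v)"
    and Phi_convex: "\<And>v. v \<in> edom (fconj f) \<Longrightarrow> convex_on (edom g) (\<lambda>u. Phi u v)"
    and Phi_concave: "\<And>u. u \<in> edom g \<Longrightarrow> concave_on (edom (fconj f)) (\<lambda>v. Phi u v)"
    and \<psi>: "1 < \<psi>" and \<xi>: "0 < \<xi>" and \<phi>: "0 < \<phi>"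
    and \<omega>: "\<omega> = 2 * \<psi> - \<xi> - \<psi>^3 * \<phi> / (1 + \<psi>)"
    and \<tau>max: "0 < \<tau>max" and \<mu>: "0 < \<mu>" "\<mu> \<le> 1" and \<beta>: "0 < \<beta>"
    and x0: "x 0 \<in> edom g" and y0: "y 0 \<in> edom (fconj f)" and \<tau>0: "0 < \<tau> 0"
    and step_z: "\<And>n. 1 \<le> n \<Longrightarrow> z n = ((\<psi> - 1) / \<psi>) *\<^sub>R x (n - 1) + (1 / \<psi>) *\<^sub>R z (n - 1)"
    and step_x: "\<And>n. 1 \<le> n \<Longrightarrow>
      x n \<in> Prox_set g (\<tau> (n - 1)) (z n - \<tau> (n - 1) *\<^sub>R Gx (x (n - 1)) (y (n - 1)))"
    and step_y: "\<And>n. 1 \<le> n \<Longrightarrow>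
      y n \<in> Prox_set (fconj f) (\<beta> * \<tau> n) (y (n - 1) + (\<beta> * \<tau> n) *\<^sub>R Gy (x n) (y (n - 1)))"
    and step_\<tau>: "\<And>n. 1 \<le> n \<Longrightarrow> \<exists>i::nat. \<tau> n = min (\<phi> * \<tau> (n - 1)) \<tau>max * \<mu> ^ i"
    and step_\<delta>: "\<And>n. 1 \<le> n \<Longrightarrow> \<delta> n = \<tau> n / \<tau> (n - 1)"
begin

definition lagrangian :: "'a \<Rightarrow> 'b \<Rightarrow> real" where
  "lagrangian u v = real_of_ereal (g u) + Phi u v - real_of_ereal (fconj f v)"

lemma g_neq_MInf: "g u \<noteq> -\<infinity>"
  using g_proper by (simp add: proper_fun_def)

lemma ereal_lagrangian:
  assumes "u \<in> edom g" and "v \<in> edom (fconj f)"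
  shows "g u + ereal (Phi u v) - fconj f v = ereal (lagrangian u v)"
proof -
  obtain a where "g u = ereal a"
    using assms(1) g_neq_MInf[of u] by (cases "g u") (auto simp: edom_def)
  moreover obtain b where "fconj f v = ereal b"
    using assms(2) fconj_neq_MInf[OF f_proper, of v] by (cases "fconj f v") (auto simp: edom_def)
  ultimately show ?thesis
    by (simp add: lagrangian_def)
qed

lemma z_Suc: "z (Suc n) = ((\<psi> - 1) / \<psi>) *\<^sub>R x n + (1 / \<psi>) *\<^sub>R z n"
  using step_z[of "Suc n"] by simp

lemma \<tau>_pos: "0 < \<tau> n"
proof (induction n)
  case (Suc n)
  obtain i where "\<tau> (Suc n) = min (\<phi> * \<tau> n) \<tau>max * \<mu> ^ i"
    using step_\<tau>[of "Suc n"] by auto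
  with Suc \<phi> \<tau>max \<mu> show ?case
    by simp
qed (fact \<tau>0)

lemma \<delta>_pos: "1 \<le> n \<Longrightarrow> 0 < \<delta> n"
  using \<tau>_pos[of n] \<tau>_pos[of "n - 1"] by (simp add: step_\<delta>)

lemma \<delta>_le_\<phi>:
  assumes "1 \<le> n"
  shows "\<delta> n \<le> \<phi>"
proof -
  obtain i where i: "\<tau> n = min (\<phi> * \<tau> (n - 1)) \<tau>max * \<mu> ^ i"
    using step_\<tau>[OF assms] by auto
  have "\<tau> n \<le> min (\<phi> * \<tau> (n - 1)) \<tau>max"
    unfolding i using \<phi> \<tau>max \<mu> \<tau>_pos[of "n - 1"] by (intro mult_left_le power_le_one) auto
  then show ?thesis
    using \<tau>_pos[of "n - 1"] by (simp add: step_\<delta>[OF assms] divide_le_eq)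
qed

lemma x_in_edom: "x n \<in> edom g"
proof (cases n)
  case (Suc m)
  then show ?thesis
    using Prox_set_in_edom[OF step_x x0] by simp
qed (simp add: x0)

lemma y_in_edom: "y n \<in> edom (fconj f)"
proof (cases n)
  case (Suc m)
  then show ?thesis
    using Prox_set_in_edom[OF step_y y0] by simp
qed (simp add: y0)

lemma x_prox_ineq:
  assumes "1 \<le> n" and "u \<in> edom g"
  shows "\<tau> (n - 1) * (real_of_ereal (g (x n)) - real_of_ereal (g u))
    \<le> (x n - (z n - \<tau> (n - 1) *\<^sub>R Gx (x (n - 1)) (y (n - 1)))) \<bullet> (u - x n)"
  by (rule Prox_set_variational_ineq[OF step_x[OF assms(1)] \<tau>_pos g_convex g_neq_MInf assms(2)])

lemma x_prox_ineq_rescaled: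
  assumes n: "1 \<le> n" and u: "u \<in> edom g"
  shows "\<tau> n * (real_of_ereal (g (x n)) - real_of_ereal (g u))
    \<le> \<delta> n * \<psi> * ((x n - z (n + 1)) \<bullet> (u - x n)) + \<tau> n * (Gx (x (n - 1)) (y (n - 1)) \<bullet> (u - x n))"
proof -
  define grad where "grad = Gx (x (n - 1)) (y (n - 1))"
  have shift: "x n - (z n - \<tau> (n - 1) *\<^sub>R grad) = \<psi> *\<^sub>R (x n - z (n + 1)) + \<tau> (n - 1) *\<^sub>R grad"
  proof -
    have "\<psi> *\<^sub>R z (n + 1) = (\<psi> - 1) *\<^sub>R x n + z n"
      using z_Suc[of n] \<psi> by (simp add: scaleR_add_right)
    then show ?thesis
      by (simp add: scaleR_diff_right algebra_simps)
  qed
  have "\<tau> (n - 1) * (real_of_ereal (g (x n)) - real_of_ereal (g u))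
      \<le> (\<psi> *\<^sub>R (x n - z (n + 1)) + \<tau> (n - 1) *\<^sub>R grad) \<bullet> (u - x n)"
    using x_prox_ineq[OF n u] unfolding grad_def[symmetric] shift .
  then have "\<delta> n * (\<tau> (n - 1) * (real_of_ereal (g (x n)) - real_of_ereal (g u)))
      \<le> \<delta> n * ((\<psi> *\<^sub>R (x n - z (n + 1)) + \<tau> (n - 1) *\<^sub>R grad) \<bullet> (u - x n))"
    using \<delta>_pos[OF n] by (intro mult_left_mono) auto
  moreover have "\<delta> n * \<tau> (n - 1) = \<tau> n"
    using \<tau>_pos[of "n - 1"] by (simp add: step_\<delta>[OF n])
  ultimately show ?thesis
    by (simp add: grad_def inner_add_left distrib_left mult.assoc[symmetric])
qed

lemma primal_step_ineq:
  assumes n: "1 \<le> n" and w: "w \<in> edom g"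
  shows "\<tau> n * (real_of_ereal (g (x n)) + Phi (x n) (y n) - real_of_ereal (g w) - Phi w (y n))
    \<le> (x (n + 1) - z (n + 1)) \<bullet> (w - x (n + 1))
       + \<delta> n * \<psi> * ((x n - z (n + 1)) \<bullet> (x (n + 1) - x n))
       + \<tau> n * (theta_n Gx x y n (y n) \<bullet> (x n - x (n + 1)))"
proof -
  define G where "G u = real_of_ereal (g u)" for u
  define grad grad' where "grad = Gx (x n) (y n)" and "grad' = Gx (x (n - 1)) (y (n - 1))"
  have next_step: "\<tau> n * (G (x (n + 1)) - G w)
      \<le> (x (n + 1) - (z (n + 1) - \<tau> n *\<^sub>R grad)) \<bullet> (w - x (n + 1))"
    using x_prox_ineq[of "n + 1" w] w by (simp add: G_def grad_def)
  have this_step: "\<tau> n * (G (x n) - G (x (n + 1)))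
      \<le> \<delta> n * \<psi> * ((x n - z (n + 1)) \<bullet> (x (n + 1) - x n)) + \<tau> n * (grad' \<bullet> (x (n + 1) - x n))"
    using x_prox_ineq_rescaled[OF n x_in_edom] by (simp add: G_def grad'_def)
  have "Phi (x n) (y n) + grad \<bullet> (w - x n) \<le> Phi w (y n)"
    unfolding grad_def
    by (rule convex_on_imp_above_tangent_inner[OF Phi_convex[OF y_in_edom] x_in_edom w
          Gx_deriv[OF x_in_edom y_in_edom]])
  from mult_left_mono[OF this, of "\<tau> n"] \<tau>_pos[of n]
  have tangent: "\<tau> n * Phi (x n) (y n) + \<tau> n * (grad \<bullet> (w - x n)) \<le> \<tau> n * Phi w (y n)"
    by (simp add: algebra_simps)
  have "\<tau> n * (grad \<bullet> (w - x (n + 1))) + \<tau> n * (grad' \<bullet> (x (n + 1) - x n))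
      = \<tau> n * (grad \<bullet> (w - x n)) + \<tau> n * ((grad - grad') \<bullet> (x n - x (n + 1)))"
    by (simp add: inner_diff_left inner_diff_right algebra_simps)
  with next_step this_step tangent show ?thesis
    unfolding theta_n_def G_def[symmetric] grad_def[symmetric] grad'_def[symmetric]
    by (simp add: inner_diff_left inner_add_left algebra_simps)
qed

lemma dual_step_ineq:
  assumes n: "1 \<le> n" and v: "v \<in> edom (fconj f)"
  shows "\<tau> n * (real_of_ereal (fconj f (y n)) - real_of_ereal (fconj f v)
      + Phi (x n) v - Phi (x n) (y n))
    \<le> 1 / \<beta> * ((y n - y (n - 1)) \<bullet> (v - y n)) + \<tau> n * PhiY_n Phi Gy x y n (y n)"
proof -
  define F where "F v = real_of_ereal (fconj f v)" for v
  define q where "q = x n"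
  define grad where "grad = Gy q (y (n - 1))"
  have t: "0 < \<tau> n" and \<beta>t: "0 < \<beta> * \<tau> n"
    using \<tau>_pos \<beta> by auto
  have "\<beta> * \<tau> n * (F (y n) - F v) \<le> (y n - (y (n - 1) + (\<beta> * \<tau> n) *\<^sub>R grad)) \<bullet> (v - y n)"
    using Prox_set_variational_ineq[OF step_y[OF n] \<beta>t convex_fun_fconj fconj_neq_MInf[OF f_proper] v]
    by (simp add: F_def grad_def q_def)
  then have y_step: "\<tau> n * (F (y n) - F v)
      \<le> 1 / \<beta> * ((y n - y (n - 1)) \<bullet> (v - y n)) - \<tau> n * (grad \<bullet> (v - y n))"
    using \<beta> by (simp add: inner_diff_left inner_add_left field_simps)
  have "- Phi q (y (n - 1)) + (- grad) \<bullet> (v - y (n - 1)) \<le> - Phi q v"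
  proof (rule convex_on_imp_above_tangent_inner[where \<phi> = "\<lambda>v. - Phi q v"])
    show "convex_on (edom (fconj f)) (\<lambda>v. - Phi q v)"
      using Phi_concave[OF x_in_edom] by (simp add: q_def concave_on_def)
    show "((\<lambda>v. - Phi q v) has_derivative (\<bullet>) (- grad)) (at (y (n - 1)))"
      unfolding q_def grad_def
      by (rule has_derivative_eq_rhs[OF has_derivative_minus[OF Gy_deriv[OF x_in_edom y_in_edom]]])
        (simp add: fun_eq_iff)
  qed (use y_in_edom v in auto)
  from mult_left_mono[OF this, of "\<tau> n"] t
  have tangent: "\<tau> n * Phi q v \<le> \<tau> n * Phi q (y (n - 1)) + \<tau> n * (grad \<bullet> (v - y (n - 1)))"
    by (simp add: algebra_simps)
  have "\<tau> n * (grad \<bullet> (v - y (n - 1)))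
      = \<tau> n * (grad \<bullet> (v - y n)) + \<tau> n * (grad \<bullet> (y n - y (n - 1)))"
    by (simp add: inner_diff_right algebra_simps)
  with y_step tangent show ?thesis
    unfolding PhiY_n_def F_def[symmetric] q_def[symmetric] grad_def[symmetric]
    by (simp add: algebra_simps)
qed

lemma one_step_descent:
  assumes n: "1 \<le> n" and w: "w \<in> edom g" and v: "v \<in> edom (fconj f)"
  shows "\<psi> / (\<psi> - 1) * norm (z (n + 2) - w)^2 + 1 / \<beta> * norm (y n - v)^2
      + \<omega> * \<delta> n * norm (x (n + 1) - x n)^2 + 2 * \<tau> n * (lagrangian (x n) v - lagrangian w (y n))
    \<le> \<psi> / (\<psi> - 1) * norm (z (n + 1) - w)^2 + 1 / \<beta> * norm (y (n - 1) - v)^2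
      + \<tau> n * \<tau> (n - 1) / \<xi> * norm (theta_n Gx x y n (y n))^2 - 1 / \<beta> * norm (y n - y (n - 1))^2
      + 2 * \<tau> n * PhiY_n Phi Gy x y n (y n)"
proof (rule descent_from_inner_bound[OF \<psi> \<xi> \<beta> \<omega> \<tau>_pos \<tau>_pos step_\<delta>[OF n] \<delta>_le_\<phi>[OF n]])
  show "z (n + 2) = ((\<psi> - 1) / \<psi>) *\<^sub>R x (n + 1) + (1 / \<psi>) *\<^sub>R z (n + 1)"
    using z_Suc[of "n + 1"] by simp
  have "\<tau> n * (lagrangian (x n) v - lagrangian w (y n))
      = \<tau> n * (real_of_ereal (g (x n)) + Phi (x n) (y n) - real_of_ereal (g w) - Phi w (y n))
        + \<tau> n * (real_of_ereal (fconj f (y n)) - real_of_ereal (fconj f v)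
            + Phi (x n) v - Phi (x n) (y n))"
    by (simp add: lagrangian_def algebra_simps)
  then show "\<tau> n * (lagrangian (x n) v - lagrangian w (y n))
    \<le> (x (n + 1) - z (n + 1)) \<bullet> (w - x (n + 1)) + \<delta> n * \<psi> * ((x n - z (n + 1)) \<bullet> (x (n + 1) - x n))
      + \<tau> n * (theta_n Gx x y n (y n) \<bullet> (x n - x (n + 1)))
      + 1 / \<beta> * ((y n - y (n - 1)) \<bullet> (v - y n)) + \<tau> n * PhiY_n Phi Gy x y n (y n)"
    using primal_step_ineq[OF n w] dual_step_ineq[OF n v] by linarith
qed

end

theorem lemma3p2:
  fixes f :: "'b::euclidean_space \<Rightarrow> ereal"
    and g :: "'a::euclidean_space \<Rightarrow> ereal"
    and Phi :: "'a \<Rightarrow> 'b \<Rightarrow> real"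
    and Gx :: "'a \<Rightarrow> 'b \<Rightarrow> 'a" and Gy :: "'a \<Rightarrow> 'b \<Rightarrow> 'b"
    and \<psi> \<xi> \<phi> \<omega> \<tau>max \<nu> \<mu> \<eta> \<beta> :: real and M :: nat
    and x z :: "nat \<Rightarrow> 'a" and y :: "nat \<Rightarrow> 'b" and \<tau> \<delta> :: "nat \<Rightarrow> real"
    and xs :: 'a and ys :: 'b
  assumes f_pcc: "proper_fun f" "closed_fun f" "convex_fun f"
    and g_pcc: "proper_fun g" "closed_fun g" "convex_fun g"
    \<comment> \<open>Phi continuous on dom g x dom f*, with partial gradients Gx, Gy\<close>
    and Phi_cont: "continuous_on (edom g \<times> edom (fconj f)) (\<lambda>(u, v). Phi u v)"
    and Gx_deriv: "\<And>u v. u \<in> edom g \<Longrightarrow> v \<in> edom (fconj f) \<Longrightarrow>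
                     ((\<lambda>u'. Phi u' v) has_derivative (\<lambda>h. Gx u v \<bullet> h)) (at u)"
    and Gy_deriv: "\<And>u v. u \<in> edom g \<Longrightarrow> v \<in> edom (fconj f) \<Longrightarrow>
                     ((\<lambda>v'. Phi u v') has_derivative (\<lambda>h. Gy u v \<bullet> h)) (at v)"
    \<comment> \<open>(A2)\<close>
    and Phi_cvx: "\<And>v. v \<in> edom (fconj f) \<Longrightarrow> convex_on (edom g) (\<lambda>u. Phi u v)"
    and Phi_ccv: "\<And>u. u \<in> edom g \<Longrightarrow> concave_on (edom (fconj f)) (\<lambda>v. Phi u v)"
    and Lip: "\<And>X Y. bounded X \<Longrightarrow> bounded Y \<Longrightarrow>
               \<exists>Lyy Lxx Lxy. Lyy \<ge> 0 \<and> Lxx \<ge> 0 \<and> Lxy > 0 \<and>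
                 (\<forall>u\<in>X \<inter> edom g. \<forall>u'\<in>X \<inter> edom g. \<forall>v\<in>Y \<inter> edom (fconj f). \<forall>v'\<in>Y \<inter> edom (fconj f).
                    norm (Gy u v - Gy u v') \<le> Lyy * norm (v - v') \<and>
                    norm (Gx u v - Gx u' v') \<le> Lxx * norm (u - u') + Lxy * norm (v - v'))"
    \<comment> \<open>(A1): Omega nonempty and the saddle point (xs, ys) in Omega\<close>
    and Omega: "xs \<in> edom g" "ys \<in> edom (fconj f)"
               "- Gx xs ys \<in> subdiff g xs" "Gy xs ys \<in> subdiff (fconj f) ys"
    and L_fin: "\<bar>g xs + ereal (Phi xs ys) - fconj f ys\<bar> \<noteq> \<infinity>"
    \<comment> \<open>parameters of PDAc-L\<close>
    and par_psi: "1 < \<psi>" "\<psi> < 1 + sqrt 3"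
    and par_xi: "\<xi> > 0" and par_phi: "\<phi> > 1"
    and omega_def: "\<omega> = 2 * \<psi> - \<xi> - \<psi>^3 * \<phi> / (1 + \<psi>)" and omega_pos: "\<omega> > 0"
    and par_tmax: "\<tau>max > 0"
    and par_nu: "0 < \<nu>" "\<nu> < 1" and par_mu: "0 < \<mu>" "\<mu> < 1"
    and par_eta: "0 \<le> \<eta>" "\<eta> < 1" and par_M: "M \<ge> 1" and par_beta: "\<beta> > 0"
    \<comment> \<open>initialisation\<close>
    and init: "x 0 \<in> edom g" "y 0 \<in> edom (fconj f)" "0 < \<tau> 0" "\<tau> 0 \<le> \<tau>max"
              "z 0 = x 0" "\<delta> 0 = 1"
    \<comment> \<open>step (1)\<close>
    and step_z: "\<And>n. n \<ge> 1 \<Longrightarrow> z n = ((\<psi> - 1) / \<psi>) *\<^sub>R x (n - 1) + (1 / \<psi>) *\<^sub>R z (n - 1)"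
    and step_x: "\<And>n. n \<ge> 1 \<Longrightarrow>
                   x n \<in> Prox_set g (\<tau> (n - 1)) (z n - \<tau> (n - 1) *\<^sub>R Gx (x (n - 1)) (y (n - 1)))"
    \<comment> \<open>step (2): backtracking linesearch with the smallest admissible i\<close>
    and step_y: "\<And>n. n \<ge> 1 \<Longrightarrow>
       (let tb = min (\<phi> * \<tau> (n - 1)) \<tau>max;
            Y = (\<lambda>t. Prox_set (fconj f) (\<beta> * t) (y (n - 1) + (\<beta> * t) *\<^sub>R Gy (x n) (y (n - 1))));
            C = (\<lambda>t v. t * \<tau> (n - 1) / \<xi> * (norm (theta_n Gx x y n v))^2 + 2 * t * PhiY_n Phi Gy x y n v
                     \<le> \<nu> * r_n \<omega> \<beta> \<delta> x y n v + (1 - \<nu>) * c_n \<eta> M \<omega> \<beta> \<delta> x y n)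
        in \<exists>i::nat. \<tau> n = tb * \<mu> ^ i \<and> y n \<in> Y (\<tau> n) \<and> C (\<tau> n) (y n) \<and>
                   (\<forall>j<i. \<forall>v \<in> Y (tb * \<mu> ^ j). \<not> C (tb * \<mu> ^ j) v))"
    \<comment> \<open>step (3)\<close>
    and step_delta: "\<And>n. n \<ge> 1 \<Longrightarrow> \<delta> n = \<tau> n / \<tau> (n - 1)"
  shows "\<forall>n\<ge>1.
    (let L = (\<lambda>u v. g u + ereal (Phi u v) - fconj f v);
         J = (\<lambda>u v. L u ys - L xs v);
         a = (\<lambda>k. \<psi> / (\<psi> - 1) * (norm (z (k + 1) - xs))^2 + (1 / \<beta>) * (norm (y (k - 1) - ys))^2
                   + \<omega> * \<delta> (k - 1) * (norm (x k - x (k - 1)))^2);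
         b = (\<lambda>k. - (\<tau> k * \<tau> (k - 1) / \<xi>) * (norm (theta_n Gx x y k (y k)))^2
                   + (1 / \<beta>) * (norm (y k - y (k - 1)))^2
                   + \<omega> * \<delta> (k - 1) * (norm (x k - x (k - 1)))^2 - 2 * \<tau> k * PhiY_n Phi Gy x y k (y k))
     in ereal (a (n + 1)) + ereal (2 * \<tau> n) * J (x n) (y n) \<le> ereal (a n - b n))"
proof -
  have y_step: "y n \<in> Prox_set (fconj f) (\<beta> * \<tau> n) (y (n - 1) + (\<beta> * \<tau> n) *\<^sub>R Gy (x n) (y (n - 1)))"
    and \<tau>_step: "\<exists>i::nat. \<tau> n = min (\<phi> * \<tau> (n - 1)) \<tau>max * \<mu> ^ i" if "1 \<le> n" for n
    using step_y[OF that] by (auto simp: Let_def)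
  interpret pdac_l_iteration f g Phi Gx Gy \<psi> \<xi> \<phi> \<omega> \<tau>max \<mu> \<beta> x z y \<tau> \<delta>
    using f_pcc(1) g_pcc(1,3) Gx_deriv Gy_deriv Phi_cvx Phi_ccv par_psi(1) par_xi par_phi omega_def
      par_tmax par_mu par_beta init(1-3) step_z step_x y_step \<tau>_step step_delta
    by unfold_locales auto
  have J: "(g (x n) + ereal (Phi (x n) ys) - fconj f ys) - (g xs + ereal (Phi xs (y n)) - fconj f (y n))
      = ereal (lagrangian (x n) ys - lagrangian xs (y n))" for n
    using ereal_lagrangian x_in_edom y_in_edom Omega(1,2) by simp
  show ?thesis
    unfolding Let_def J using one_step_descent[OF _ Omega(1,2)] by (simp add: algebra_simps)
qed

end
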